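(* Assume A1 and A2, for a function $\rho:(0,1)\to(0,\infty)$ satisfying R2, R3 and R4. Let $(\tilde\theta_n,X_n)_{n\ge0}$ and $(\gamma_n)_{n\ge1}$ be generated by the WL$_\rho$ algorithm. If $(\gamma_n)_{n\ge1}$ is non-increasing, bounded from above by a deterministic sequence converging to $0$, and satisfies $\bar r_{d,\gamma}:=\sup_{n\ge1}\frac{\gamma_n}{\gamma_{n+d-1}}<+\infty$, then almost surely the sequence $(\theta_n)_{n\ge0}$ returns infinitely often to a compact subset of $\Theta$.
   Context: Let $\mathsf X\subset\mathbb R^D$ be measurable, $\lambda$ a nonnegative reference measure, $\pi$ a probability density on $\mathsf X$ w.r.t. $\lambda$. $\mathsf X=\bigcup_{i=1}^d\mathsf X_i$ is a partition into disjoint measurable strata, $I(x)=i$ iff $x\in\mathsf X_i$, $\theta_\star(i)=\int_{\mathsf X_i}\pi\,d\lambda$, $\Theta=\{\theta\in(0,1)^d:\sum_i\theta(i)=1\}$. For measurable $\rho:(0,1)\to(0,\infty)$ and $\theta\in\Theta$, $\pi^\rho_\theta(x)=(Z^\rho_\theta)^{-1}\sum_{i}\frac{\pi(x)}{\rho(\theta(i))}\mathbf 1_{\mathsf X_i}(x)$, $Z^\rho_\theta=\sum_i\frac{\theta_\star(i)}{\rho(\theta(i))}$. A1: $\sup_{\mathsf X}\pi<\infty$ and $\min_i\theta_\star(i)>0$. A2: for every $\theta\in\Theta$, $P^\rho_\theta$ is the Metropolis–Hastings kernel with symmetric proposal density $q(x,y)$ w.r.t. $\lambda$, $\inf_{\mathsf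 X^2}q>0$, and invariant distribution $\pi^\rho_\theta\,d\lambda$. R2: $\sup_{(0,1)}\rho<\infty$. R3: $\rho$ is non-decreasing on $(0,1)$ and there is $R>1$ with $\inf_{t\in(0,1/R)}\rho(t)/\rho(Rt)>0$. R4: $t\mapsto\rho(t)/t$ is non-increasing on $(0,1)$ and $\lim_{t\to0^+}\rho(t)/t=+\infty$. WL$_\rho$ algorithm: given a (possibly random) initial condition $(\tilde\theta_0,X_0)\in(0,\infty)^d\times\mathsf X$ and a (possibly random) sequence of positive stepsizes $(\gamma_n)_{n\ge1}$, for $n\ge0$: $S_n=\sum_i\tilde\theta_n(i)$, $\theta_n=\tilde\theta_n/S_n$; draw $X_{n+1}$, conditionally on $\sigma(\tilde\theta_0,X_0,\dots,X_n)$, from $P^\rho_{\theta_n}(X_n,\cdot)$; set $\tilde\theta_{n+1}(i)=\tilde\theta_n(i)\big(1+\gamma_{n+1}\frac{\rho(\theta_n(i))}{\theta_n(i)}\mathbf 1_{\mathsf X_i}(X_{n+1})\big)$. *)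

theory Defs
  imports "HOL-Probability.Probability"
begin

definition stratum :: "'a measure \<Rightarrow> ('a \<Rightarrow> 'd) \<Rightarrow> 'd \<Rightarrow> 'a set" where
  "stratum lam I i = {x \<in> space lam. I x = i}"

definition theta_star :: "'a measure \<Rightarrow> ('a \<Rightarrow> real) \<Rightarrow> ('a \<Rightarrow> 'd) \<Rightarrow> 'd \<Rightarrow> real" where
  "theta_star lam piX I i = (\<integral>x. indicator (stratum lam I i) x * piX x \<partial>lam)"

definition wl_Theta :: "(real ^ 'd::finite) set" where
  "wl_Theta = {th. (\<forall>i. 0 < th $ i \<and> th $ i < 1) \<and> (\<Sum>i\<in>UNIV. th $ i) = 1}"

definition bias_Z :: "'a measure \<Rightarrow> ('a \<Rightarrow> real) \<Rightarrow> ('a \<Rightarrow> 'd::finite) \<Rightarrow> (real \<Rightarrow> real)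
    \<Rightarrow> real ^ 'd \<Rightarrow> real" where
  "bias_Z lam piX I rho th = (\<Sum>i\<in>UNIV. theta_star lam piX I i / rho (th $ i))"

definition bias_density :: "'a measure \<Rightarrow> ('a \<Rightarrow> real) \<Rightarrow> ('a \<Rightarrow> 'd::finite) \<Rightarrow> (real \<Rightarrow> real)
    \<Rightarrow> real ^ 'd \<Rightarrow> 'a \<Rightarrow> real" where
  "bias_density lam piX I rho th x = piX x / rho (th $ I x) / bias_Z lam piX I rho th"

(* Metropolis-Hastings acceptance probability for target density p and symmetric proposal;
   convention: acceptance 1 if p x = 0 *)
definition mh_accept :: "('a \<Rightarrow> real) \<Rightarrow> 'a \<Rightarrow> 'a \<Rightarrow> real" where
  "mh_accept p x y = (if p x = 0 then 1 else min 1 (p y / p x))"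

definition mh_kernel :: "'a measure \<Rightarrow> ('a \<Rightarrow> 'a \<Rightarrow> real) \<Rightarrow> ('a \<Rightarrow> real) \<Rightarrow> 'a \<Rightarrow> 'a set \<Rightarrow> real" where
  "mh_kernel lam q p x A =
     (\<integral>y. indicator A y * (q x y * mh_accept p x y) \<partial>lam)
     + indicator A x * (1 - (\<integral>y. q x y * mh_accept p x y \<partial>lam))"

definition wl_normalize :: "real ^ 'd::finite \<Rightarrow> real ^ 'd" where
  "wl_normalize v = (1 / (\<Sum>i\<in>UNIV. v $ i)) *\<^sub>R v"

fun wl_tilde :: "(real \<Rightarrow> real) \<Rightarrow> ('a \<Rightarrow> 'd::finite) \<Rightarrow> ('w \<Rightarrow> real ^ 'd)
    \<Rightarrow> (nat \<Rightarrow> 'w \<Rightarrow> real) \<Rightarrow> (nat \<Rightarrow> 'w \<Rightarrow> 'a) \<Rightarrow> nat \<Rightarrow> 'w \<Rightarrow> real ^ 'd" where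
  "wl_tilde rho I th0 gam X 0 w = th0 w"
| "wl_tilde rho I th0 gam X (Suc n) w =
     (let tt = wl_tilde rho I th0 gam X n w; th = wl_normalize tt in
      (\<chi> i. tt $ i * (1 + gam (Suc n) w * (rho (th $ i) / th $ i)
                         * (if I (X (Suc n) w) = i then 1 else 0))))"

definition wl_theta :: "(real \<Rightarrow> real) \<Rightarrow> ('a \<Rightarrow> 'd::finite) \<Rightarrow> ('w \<Rightarrow> real ^ 'd)
    \<Rightarrow> (nat \<Rightarrow> 'w \<Rightarrow> real) \<Rightarrow> (nat \<Rightarrow> 'w \<Rightarrow> 'a) \<Rightarrow> nat \<Rightarrow> 'w \<Rightarrow> real ^ 'd" where
  "wl_theta rho I th0 gam X n w = wl_normalize (wl_tilde rho I th0 gam X n w)"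

end

theory Submission
  imports Defs
begin

text \<open>
  The Lyapunov function \<open>Y n = (\<Prod>i. 1 / \<theta> n i)\<close> is large exactly when \<open>\<theta> n\<close> is close to the
  boundary of \<open>\<Theta>\<close>, and its sublevel sets lie in compact subsets of \<open>\<Theta>\<close>. One step of the
  algorithm multiplies \<open>Y n\<close> by \<open>(1 + \<gamma> \<rho> (\<theta> n k)) ^ d / (1 + \<gamma> \<rho> (\<theta> n k) / \<theta> n k)\<close>, where
  \<open>k\<close> is the stratum of \<open>X (n + 1)\<close>. This factor is at most \<open>exp (d \<gamma> sup \<rho>)\<close>, and when \<open>k\<close> is a
  stratum of smallest weight and that weight is small, R4 makes the denominator large. Because
  \<open>\<rho>\<close> is non-decreasing, a stratum of smallest weight is the one favoured most by the biased
  target, so with a proposal density bounded below it is reached with conditional probability at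
  least some \<open>p > 0\<close>. Once the stepsizes are small, \<open>Y\<close> is therefore a supermartingale whenever
  it exceeds a fixed level, while its one-step growth stays bounded; such a process cannot tend to
  infinity, so \<open>Y n\<close> returns infinitely often to a sublevel set.
\<close>

section \<open>Processes that are supermartingales above a level\<close>

lemma (in finite_measure) AE_not_if_small_cover:
  assumes "\<And>e. 0 < e \<Longrightarrow> \<exists>A\<in>sets M. {x\<in>space M. P x} \<subseteq> A \<and> measure M A \<le> e"
  shows "AE x in M. \<not> P x"
proof -
  obtain A where A: "\<And>i. A i \<in> sets M" "\<And>i. {x\<in>space M. P x} \<subseteq> A i"
      "\<And>i. measure M (A i) \<le> 1 / Suc i"
    using assms[of "1 / Suc _"] by (metis of_nat_0_less_iff zero_less_Suc zero_less_divide_1_iff)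
  have "measure M (\<Inter>i. A i) \<le> 1 / real n" if "1 \<le> n" for n
  proof -
    have "measure M (\<Inter>i. A i) \<le> measure M (A (n - 1))"
      using A(1) by (intro finite_measure_mono) auto
    also have "\<dots> \<le> 1 / real n"
      using A(3)[of "n - 1"] that by (simp add: Suc_diff_le)
    finally show ?thesis .
  qed
  then have "measure M (\<Inter>i. A i) \<le> 0"
    by (intro LIMSEQ_le_const[OF lim_const_over_n[of 1]]) auto
  then have "(\<Inter>i. A i) \<in> null_sets M"
    using A(1) by (simp add: emeasure_eq_measure null_setsI measure_le_0_iff)
  then show ?thesis
    using A(2) by (intro AE_I[where N="\<Inter>i. A i"]) auto
qed

text \<open>The supermartingale inequality is only required on \<open>F n\<close>-events on which \<open>Y n\<close> is at
  least \<open>K\<close>; boundedness of \<open>Y n\<close> on the event keeps all integrals finite.\<close>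

locale supermartingale_above_level = prob_space M
  for M :: "'w measure" +
  fixes F :: "nat \<Rightarrow> 'w measure" and Y :: "nat \<Rightarrow> 'w \<Rightarrow> real"
    and C K :: real and N0 :: nat
  assumes subalgebra_F: "subalgebra M (F n)"
    and sets_F_mono: "sets (F n) \<subseteq> sets (F (Suc n))"
    and adapted: "Y n \<in> borel_measurable (F n)"
    and nonneg: "w \<in> space M \<Longrightarrow> 0 \<le> Y n w"
    and growth: "w \<in> space M \<Longrightarrow> Y (Suc n) w \<le> C * Y n w"
    and supermartingale: "N0 \<le> n \<Longrightarrow> G \<in> sets (F n) \<Longrightarrow> \<forall>w\<in>G. K \<le> Y n w \<Longrightarrow>
      \<forall>w\<in>G. Y n w \<le> B \<Longrightarrow>
      (\<integral>w. indicator G w * Y (Suc n) w \<partial>M) \<le> (\<integral>w. indicator G w * Y n w \<partial>M)"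
begin

lemma space_F: "space (F n) = space M"
  using subalgebra_F by (simp add: subalgebra_def)

lemma sets_F_subset: "sets (F n) \<subseteq> sets M"
  using subalgebra_F by (simp add: subalgebra_def)

lemma adapted_le: "k \<le> n \<Longrightarrow> Y k \<in> borel_measurable (F n)"
  using adapted[of k] lift_Suc_mono_le[of "\<lambda>n. sets (F n)", OF sets_F_mono]
  by (auto simp: measurable_def space_F)

lemma measurable_Y [measurable]: "Y n \<in> borel_measurable M"
  using measurable_from_subalg[OF subalgebra_F adapted] .

lemma growth_abs: "w \<in> space M \<Longrightarrow> Y (Suc n) w \<le> \<bar>C\<bar> * Y n w"
  using growth[of w n] nonneg[of w n] by (meson abs_ge_self mult_right_mono order.trans)

text \<open>Stopped when it falls below \<open>K\<close>, the process started below \<open>j\<close> at time \<open>N\<close> keeps its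
  expectation at most \<open>j\<close>; Markov's inequality then makes escaping to infinity a null event.\<close>

definition stays_above :: "nat \<Rightarrow> real \<Rightarrow> nat \<Rightarrow> 'w set" where
  "stays_above N j n = {w\<in>space M. Y N w \<le> j \<and> (\<forall>k. N \<le> k \<and> k \<le> n \<longrightarrow> K \<le> Y k w)}"

lemma stays_above_Suc: "stays_above N j (Suc n) \<subseteq> stays_above N j n"
  by (auto simp: stays_above_def)

lemma sets_stays_above: "N \<le> n \<Longrightarrow> stays_above N j n \<in> sets (F n)"
proof -
  assume "N \<le> n"
  then have [measurable]: "Y k \<in> borel_measurable (F n)" if "k \<in> {N..n}" for k
    using adapted_le that by auto
  have "stays_above N j n = {w\<in>space (F n). Y N w \<le> j} \<inter> (\<Inter>k\<in>{N..n}. {w\<in>space (F n). K \<le> Y k w})"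
    using \<open>N \<le> n\<close> by (auto simp: stays_above_def space_F)
  also have "\<dots> \<in> sets (F n)"
    using \<open>N \<le> n\<close> by (intro sets.Int sets.finite_INT) measurable
  finally show ?thesis .
qed

lemma stays_above_bounded:
  assumes "N \<le> n" "w \<in> stays_above N j n"
  shows "Y n w \<le> j * \<bar>C\<bar> ^ (n - N)"
  using assms
proof (induction n rule: dec_induct)
  case (step n)
  then have w: "w \<in> space M" "w \<in> stays_above N j n"
    using stays_above_Suc by (auto simp: stays_above_def)
  have "Y (Suc n) w \<le> \<bar>C\<bar> * Y n w"
    using growth_abs[OF w(1)] .
  also have "\<dots> \<le> \<bar>C\<bar> * (j * \<bar>C\<bar> ^ (n - N))"
    using step.IH[OF w(2)] by (intro mult_left_mono) auto
  finally show ?case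
    using step.hyps by (simp add: Suc_diff_le mult_ac)
qed (simp add: stays_above_def)

lemma integrable_stays_above:
  assumes "N \<le> n" "0 \<le> j"
  shows "integrable M (\<lambda>w. indicator (stays_above N j n) w * Y n w)"
    and "integrable M (\<lambda>w. indicator (stays_above N j n) w * Y (Suc n) w)"
proof -
  have [measurable]: "stays_above N j n \<in> sets M"
    using sets_stays_above[OF assms(1)] sets_F_subset by blast
  have bound: "Y n w \<le> j * \<bar>C\<bar> ^ (n - N)" "Y (Suc n) w \<le> \<bar>C\<bar> * (j * \<bar>C\<bar> ^ (n - N))"
    if "w \<in> stays_above N j n" for w
  proof -
    have w: "w \<in> space M" using that by (simp add: stays_above_def)
    show "Y n w \<le> j * \<bar>C\<bar> ^ (n - N)"
      using stays_above_bounded[OF assms(1) that] .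
    from growth_abs[OF w, of n] show "Y (Suc n) w \<le> \<bar>C\<bar> * (j * \<bar>C\<bar> ^ (n - N))"
      using stays_above_bounded[OF assms(1) that] by (meson abs_ge_zero mult_left_mono order.trans)
  qed
  show "integrable M (\<lambda>w. indicator (stays_above N j n) w * Y n w)"
    using bound(1) nonneg assms(2)
    by (intro integrable_const_bound[where B="j * \<bar>C\<bar> ^ (n - N)"]) (auto split: split_indicator)
  show "integrable M (\<lambda>w. indicator (stays_above N j n) w * Y (Suc n) w)"
    using bound(2) nonneg assms(2)
    by (intro integrable_const_bound[where B="\<bar>C\<bar> * (j * \<bar>C\<bar> ^ (n - N))"])
      (auto split: split_indicator)
qed

lemma integral_stays_above_le:
  assumes "N0 \<le> N" "N \<le> n" "0 \<le> j"
  shows "(\<integral>w. indicator (stays_above N j n) w * Y n w \<partial>M) \<le> j"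
  using assms(2)
proof (induction n rule: dec_induct)
  case base
  have "(\<integral>w. indicator (stays_above N j N) w * Y N w \<partial>M) \<le> (\<integral>w. j \<partial>M)"
    using integrable_stays_above(1)[of N N j] nonneg assms(3)
    by (intro integral_mono) (auto simp: stays_above_def split: split_indicator)
  then show ?case
    by (simp add: prob_space)
next
  case (step n)
  have "(\<integral>w. indicator (stays_above N j (Suc n)) w * Y (Suc n) w \<partial>M)
      \<le> (\<integral>w. indicator (stays_above N j n) w * Y (Suc n) w \<partial>M)"
    using integrable_stays_above[of N "Suc n" j] integrable_stays_above(2)[of N n j]
      step.hyps assms(3) stays_above_Suc nonneg
    by (intro integral_mono) (auto split: split_indicator)
  also have "\<dots> \<le> (\<integral>w. indicator (stays_above N j n) w * Y n w \<partial>M)"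
    using assms(1) step.hyps stays_above_bounded[of N n]
    by (intro supermartingale sets_stays_above) (auto simp: stays_above_def)
  finally show ?case
    using step.IH by linarith
qed

lemma measure_stays_above_ge_le:
  assumes "N0 \<le> N" "N \<le> n" "0 \<le> j" "0 < H"
  shows "measure M {w\<in>stays_above N j n. H \<le> Y n w} \<le> j / H"
proof -
  have [measurable]: "stays_above N j n \<in> sets M"
    using sets_stays_above[OF assms(2)] sets_F_subset by blast
  have "measure M {w\<in>stays_above N j n. H \<le> Y n w}
      \<le> measure M {w\<in>space M. H \<le> indicator (stays_above N j n) w * Y n w}"
    using assms(4) by (intro finite_measure_mono) (auto simp: stays_above_def split: split_indicator)
  also have "\<dots> \<le> (\<integral>w. indicator (stays_above N j n) w * Y n w \<partial>M) / H"
    using integrable_stays_above(1)[OF assms(2,3)] nonneg assms(4)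
    by (intro integral_Markov_inequality_measure[where A="space M"]) auto
  also have "\<dots> \<le> j / H"
    using integral_stays_above_le[OF assms(1-3)] assms(4) by (simp add: divide_right_mono)
  finally show ?thesis .
qed

lemma measure_escape_from_le:
  assumes "N0 \<le> N" "0 \<le> j" "0 < H"
  shows "measure M {w\<in>space M. Y N w \<le> j \<and> (\<forall>k\<ge>N. K \<le> Y k w) \<and> (\<exists>m. \<forall>n\<ge>m. H \<le> Y n w)} \<le> j / H"
proof -
  define U where "U m = {w\<in>space M. Y N w \<le> j \<and> (\<forall>k\<ge>N. K \<le> Y k w) \<and> (\<forall>n\<ge>m. H \<le> Y n w)}" for m
  have [measurable]: "U m \<in> sets M" for m
    unfolding U_def by measurable
  have U_le: "measure M (U m) \<le> j / H" for m
  proof -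
    have [measurable]: "stays_above N j (max m N) \<in> sets M"
      using sets_stays_above[of N "max m N" j] sets_F_subset by auto
    have "U m \<subseteq> {w\<in>stays_above N j (max m N). H \<le> Y (max m N) w}"
      by (auto simp: U_def stays_above_def)
    then have "measure M (U m) \<le> measure M {w\<in>stays_above N j (max m N). H \<le> Y (max m N) w}"
      by (intro finite_measure_mono) measurable
    also have "\<dots> \<le> j / H"
      using assms by (intro measure_stays_above_ge_le) auto
    finally show ?thesis .
  qed
  have "incseq U"
    unfolding incseq_def U_def by auto
  then have "(\<lambda>m. measure M (U m)) \<longlonglongrightarrow> measure M (\<Union>m. U m)"
    by (intro finite_Lim_measure_incseq) auto
  then have "measure M (\<Union>m. U m) \<le> j / H"
    by (rule LIMSEQ_le_const2) (use U_le in auto)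
  moreover have "(\<Union>m. U m) = {w\<in>space M. Y N w \<le> j \<and> (\<forall>k\<ge>N. K \<le> Y k w) \<and> (\<exists>m. \<forall>n\<ge>m. H \<le> Y n w)}"
    by (auto simp: U_def)
  ultimately show ?thesis
    by simp
qed

lemma AE_not_tendsto_at_top_from:
  assumes "N0 \<le> N" "0 \<le> j"
  shows "AE w in M. \<not> (Y N w \<le> j \<and> (\<forall>k\<ge>N. K \<le> Y k w) \<and> filterlim (\<lambda>n. Y n w) at_top sequentially)"
proof (rule AE_not_if_small_cover)
  fix e :: real
  assume "0 < e"
  define H where "H = (j + 1) / e"
  have H: "0 < H" "j / H \<le> e"
    using \<open>0 < e\<close> assms(2) by (simp_all add: H_def field_simps)
  let ?A = "{w\<in>space M. Y N w \<le> j \<and> (\<forall>k\<ge>N. K \<le> Y k w) \<and> (\<exists>m. \<forall>n\<ge>m. H \<le> Y n w)}"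
  have "?A \<in> sets M"
    by measurable
  moreover have "{w\<in>space M. Y N w \<le> j \<and> (\<forall>k\<ge>N. K \<le> Y k w) \<and> filterlim (\<lambda>n. Y n w) at_top sequentially}
      \<subseteq> ?A"
    by (auto simp: filterlim_at_top eventually_sequentially)
  moreover have "measure M ?A \<le> e"
    using measure_escape_from_le[OF assms H(1)] H(2) by linarith
  ultimately show "\<exists>A\<in>sets M. {w\<in>space M. Y N w \<le> j \<and> (\<forall>k\<ge>N. K \<le> Y k w) \<and>
      filterlim (\<lambda>n. Y n w) at_top sequentially} \<subseteq> A \<and> measure M A \<le> e"
    by blast
qed

lemma AE_not_tendsto_at_top: "AE w in M. \<not> filterlim (\<lambda>n. Y n w) at_top sequentially"
proof -
  have "AE w in M. \<forall>N j. N0 \<le> N \<longrightarrow>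
      \<not> (Y N w \<le> real j \<and> (\<forall>k\<ge>N. K \<le> Y k w) \<and> filterlim (\<lambda>n. Y n w) at_top sequentially)"
    unfolding AE_all_countable using AE_not_tendsto_at_top_from by simp
  then show ?thesis
  proof (rule eventually_mono, intro notI)
    fix w
    assume no_escape: "\<forall>N j. N0 \<le> N \<longrightarrow>
        \<not> (Y N w \<le> real j \<and> (\<forall>k\<ge>N. K \<le> Y k w) \<and> filterlim (\<lambda>n. Y n w) at_top sequentially)"
      and escape: "filterlim (\<lambda>n. Y n w) at_top sequentially"
    from escape obtain N1 where "\<forall>k\<ge>N1. K \<le> Y k w"
      by (auto simp: filterlim_at_top eventually_sequentially)
    moreover have "Y (max N0 N1) w \<le> real (nat \<lceil>Y (max N0 N1) w\<rceil>)"
      by (rule real_nat_ceiling_ge)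
    ultimately show False
      using no_escape[rule_format, of "max N0 N1" "nat \<lceil>Y (max N0 N1) w\<rceil>"] escape by simp
  qed
qed

theorem AE_frequently_bounded: "AE w in M. \<exists>H. \<exists>\<^sub>F n in sequentially. Y n w \<le> H"
  using AE_not_tendsto_at_top
  by eventually_elim (auto simp: filterlim_at_top not_eventually not_le intro: frequently_elim1 less_imp_le)

end

section \<open>The Lyapunov function on the simplex\<close>

definition inv_prod :: "real ^ 'd::finite \<Rightarrow> real" where
  "inv_prod v = (\<Prod>i\<in>UNIV. 1 / v $ i)"

lemma nth_less_sum:
  fixes v :: "real ^ 'd::finite"
  assumes "CARD('d) \<ge> 2" "\<forall>i. 0 < v $ i"
  shows "v $ i < (\<Sum>j\<in>UNIV. v $ j)"
proof -
  have "0 < card (UNIV - {i} :: 'd set)"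
    using assms(1) by (simp add: card_Diff_singleton)
  then obtain j where "j \<noteq> i"
    by (metis card_gt_0_iff Diff_iff all_not_in_conv singletonI)
  then have "v $ i + v $ j \<le> (\<Sum>j\<in>UNIV. v $ j)"
    using assms(2) sum_mono2[of UNIV "{i, j}" "\<lambda>j. v $ j"] by (simp add: less_imp_le)
  then show ?thesis
    using assms(2)[rule_format, of j] by linarith
qed

lemma nth_wl_normalize: "wl_normalize v $ i = v $ i / (\<Sum>j\<in>UNIV. v $ j)"
  by (simp add: wl_normalize_def)

lemma wl_normalize_in_wl_Theta:
  fixes v :: "real ^ 'd::finite"
  assumes "CARD('d) \<ge> 2" "\<forall>i. 0 < v $ i"
  shows "wl_normalize v \<in> wl_Theta"
proof -
  have "0 < (\<Sum>j\<in>UNIV. v $ j)"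
    using assms(2) by (simp add: sum_pos)
  then show ?thesis
    using nth_less_sum[OF assms] assms(2)
    by (simp add: wl_Theta_def nth_wl_normalize sum_divide_distrib[symmetric])
qed

lemma inv_prod_pos: "\<forall>i. 0 < v $ i \<Longrightarrow> 0 < inv_prod v"
  by (simp add: inv_prod_def prod_pos)

lemma inv_prod_ge:
  assumes "v \<in> wl_Theta"
  shows "1 / v $ j \<le> inv_prod v"
proof -
  have v: "0 < v $ i" "v $ i < 1" for i
    using assms by (auto simp: wl_Theta_def)
  have "1 / v $ j * 1 \<le> 1 / v $ j * (\<Prod>i\<in>UNIV - {j}. 1 / v $ i)"
    using v by (intro mult_left_mono prod_ge_1) (auto simp: less_imp_le)
  then show ?thesis
    by (simp add: inv_prod_def prod.remove)
qed

lemma inv_prod_le_min_power: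
  fixes v :: "real ^ 'd::finite"
  assumes "\<forall>i. 0 < v $ i" "\<forall>i. v $ k \<le> v $ i"
  shows "inv_prod v \<le> (1 / v $ k) ^ CARD('d)"
proof -
  have "inv_prod v \<le> (\<Prod>i\<in>(UNIV::'d set). 1 / v $ k)"
    unfolding inv_prod_def using assms by (intro prod_mono) (simp add: frac_le less_imp_le)
  then show ?thesis
    by simp
qed

lemma min_le_of_inv_prod_ge:
  fixes v :: "real ^ 'd::finite"
  assumes "\<forall>i. 0 < v $ i" "\<forall>i. v $ k \<le> v $ i" "0 < t" "(1 / t) ^ CARD('d) \<le> inv_prod v"
  shows "v $ k \<le> t"
proof -
  have "(1 / t) ^ CARD('d) \<le> (1 / v $ k) ^ CARD('d)"
    using assms(4) inv_prod_le_min_power[OF assms(1,2)] by linarith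
  moreover have "0 < v $ k"
    using assms(1) by simp
  ultimately have "1 / t \<le> 1 / v $ k"
    using assms(3) power_mono_iff[of "1 / t" "1 / v $ k" "CARD('d)"] by simp
  then show ?thesis
    using assms(1,3) by (simp add: field_simps)
qed

lemma simplex_floor_compact_subset_wl_Theta:
  fixes \<delta> :: real
  assumes "CARD('d::finite) \<ge> 2" "0 < \<delta>"
  defines "K \<equiv> {v :: real ^ 'd. (\<forall>j. \<delta> \<le> v $ j) \<and> (\<Sum>j\<in>UNIV. v $ j) = 1}"
  shows "compact K" and "K \<subseteq> wl_Theta"
proof -
  have "closed {v :: real ^ 'd. \<delta> \<le> v $ j}" for j
    by (intro closed_Collect_le continuous_intros)
  then have "closed K"
    unfolding K_def Collect_conj_eq Collect_all_eq
    by (intro closed_Int closed_INT closed_Collect_eq continuous_intros) auto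
  moreover have "norm v \<le> 1" if "v \<in> K" for v
  proof -
    have "norm v \<le> (\<Sum>i\<in>UNIV. \<bar>v $ i\<bar>)"
      by (rule norm_le_l1_cart)
    also have "\<dots> = (\<Sum>i\<in>UNIV. v $ i)"
    proof (rule sum.cong)
      fix i
      have "\<delta> \<le> v $ i"
        using that by (simp add: K_def)
      then show "\<bar>v $ i\<bar> = v $ i"
        using assms(2) by simp
    qed simp
    also have "\<dots> = 1"
      using that by (simp add: K_def)
    finally show ?thesis .
  qed
  then have "bounded K"
    by (auto simp: bounded_iff)
  ultimately show "compact K"
    by (simp add: compact_eq_bounded_closed)
  show "K \<subseteq> wl_Theta"
  proof
    fix v
    assume "v \<in> K"
    then have pos: "\<forall>i. 0 < v $ i" and sum: "(\<Sum>j\<in>UNIV. v $ j) = 1"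
      using assms(2) by (auto simp: K_def intro: less_le_trans)
    have "v $ i < 1" for i
      using nth_less_sum[OF assms(1) pos, of i] sum by simp
    then show "v \<in> wl_Theta"
      using pos sum by (simp add: wl_Theta_def)
  qed
qed

lemma frequently_in_compact_if_frequently_inv_prod_le:
  fixes \<theta> :: "nat \<Rightarrow> real ^ 'd::finite"
  assumes "CARD('d) \<ge> 2" "\<And>n. \<theta> n \<in> wl_Theta" "\<exists>\<^sub>F n in sequentially. inv_prod (\<theta> n) \<le> H"
  shows "\<exists>K. compact K \<and> K \<subseteq> wl_Theta \<and> (\<exists>\<^sub>F n in sequentially. \<theta> n \<in> K)"
proof -
  obtain n0 where "inv_prod (\<theta> n0) \<le> H"
    using frequently_ex[OF assms(3)] by blast
  moreover have "0 < inv_prod (\<theta> n0)"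
    using assms(2)[of n0] by (intro inv_prod_pos) (simp add: wl_Theta_def)
  ultimately have "0 < H"
    by linarith
  define K where "K = {v :: real ^ 'd. (\<forall>j. 1 / H \<le> v $ j) \<and> (\<Sum>j\<in>UNIV. v $ j) = 1}"
  have in_K: "\<theta> n \<in> K" if "inv_prod (\<theta> n) \<le> H" for n
  proof -
    have "1 / \<theta> n $ j \<le> H" for j
      using inv_prod_ge[OF assms(2)] that by (meson order.trans)
    moreover have "0 < \<theta> n $ j" for j
      using assms(2)[of n] by (simp add: wl_Theta_def)
    ultimately show ?thesis
      using assms(2)[of n] \<open>0 < H\<close> by (auto simp: K_def wl_Theta_def field_simps)
  qed
  have "\<exists>\<^sub>F n in sequentially. \<theta> n \<in> K"
    using frequently_elim1[OF assms(3) in_K] .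
  then show ?thesis
    using simplex_floor_compact_subset_wl_Theta[OF assms(1), of "1 / H"] \<open>0 < H\<close>
    unfolding K_def by auto
qed

lemma inv_prod_wl_normalize:
  fixes v :: "real ^ 'd::finite"
  assumes "\<forall>i. 0 < v $ i"
  shows "inv_prod (wl_normalize v) = (\<Sum>j\<in>UNIV. v $ j) ^ CARD('d) / (\<Prod>i\<in>UNIV. v $ i)"
  by (simp add: inv_prod_def nth_wl_normalize prod_dividef)

lemma inv_prod_wl_normalize_scale:
  fixes v :: "real ^ 'd::finite" and k :: 'd
  assumes pos: "\<forall>i. 0 < v $ i" and "0 \<le> a"
  defines "\<theta> \<equiv> wl_normalize v"
  defines "f \<equiv> 1 + a / \<theta> $ k"
  shows "inv_prod (wl_normalize (\<chi> i. v $ i * (if i = k then f else 1)))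
    = inv_prod \<theta> * (1 + a) ^ CARD('d) / f"
proof -
  define S where "S = (\<Sum>j\<in>UNIV. v $ j)"
  define v' where "v' = (\<chi> i. v $ i * (if i = k then f else 1))"
  have "0 < S"
    using pos by (simp add: S_def sum_pos)
  have "0 < \<theta> $ k"
    using pos \<open>0 < S\<close> by (simp add: \<theta>_def nth_wl_normalize S_def)
  then have "1 \<le> f"
    using \<open>0 \<le> a\<close> by (simp add: f_def)
  then have pos': "\<forall>i. 0 < v' $ i"
    using pos by (simp add: v'_def)
  have "v' $ j = v $ j + (if j = k then v $ j * (f - 1) else 0)" for j
    by (simp add: v'_def algebra_simps)
  then have "(\<Sum>j\<in>UNIV. v' $ j) = S + v $ k * (f - 1)"
    by (simp add: S_def sum.distrib)
  also have "v $ k * (f - 1) = S * a"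
    using \<open>0 < S\<close> pos[rule_format, of k] by (simp add: f_def \<theta>_def nth_wl_normalize S_def)
  finally have sum': "(\<Sum>j\<in>UNIV. v' $ j) = S * (1 + a)"
    by (simp add: algebra_simps)
  have "(\<Prod>i\<in>UNIV. v' $ i) = (\<Prod>i\<in>UNIV. v $ i) * (\<Prod>i\<in>UNIV. if i = k then f else 1)"
    by (simp only: v'_def vec_lambda_beta prod.distrib)
  then have prod': "(\<Prod>i\<in>UNIV. v' $ i) = (\<Prod>i\<in>UNIV. v $ i) * f"
    by simp
  show ?thesis
    unfolding v'_def[symmetric] \<theta>_def inv_prod_wl_normalize[OF pos'] inv_prod_wl_normalize[OF pos]
    by (simp add: sum' prod' S_def power_mult_distrib)
qed

lemma one_plus_power_le_exp:
  fixes x :: real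
  assumes "0 \<le> x"
  shows "(1 + x) ^ n \<le> exp (real n * x)"
proof -
  have "(1 + x) ^ n \<le> exp x ^ n"
    using assms by (intro power_mono) (auto simp: add.commute exp_ge_add_one_self)
  then show ?thesis
    by (simp add: exp_of_nat_mult)
qed

lemma exp_mult_contraction_le_one:
  fixes A g L p :: real
  assumes "0 \<le> A" "0 \<le> g" "0 \<le> L" "2 * A \<le> p * L" "2 * A * g \<le> p"
  shows "exp (A * g) * (1 - p * (g * L / (1 + g * L))) \<le> 1"
proof -
  have "A * g * (1 + g * L) \<le> p * (g * L)"
  proof -
    have "2 * A * g * L \<le> p * L"
      using mult_right_mono[OF assms(5,3)] .
    then have "A + A * g * L \<le> p * L"
      using assms(4) by linarith
    then have "g * (A + A * g * L) \<le> g * (p * L)"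
      using assms(2) by (rule mult_left_mono)
    then show ?thesis
      by (simp add: algebra_simps)
  qed
  moreover have "0 < 1 + g * L"
    using assms(2,3) by (simp add: add_pos_nonneg)
  ultimately have "A * g \<le> p * (g * L / (1 + g * L))"
    by (simp add: field_simps)
  then have "exp (A * g) * (1 - p * (g * L / (1 + g * L))) \<le> exp (A * g) * (1 - A * g)"
    by (intro mult_left_mono) auto
  also have "\<dots> \<le> exp (A * g) * exp (- (A * g))"
    by (intro mult_left_mono) (auto simp: add.commute exp_ge_add_one_self[of "- (A * g)", simplified])
  finally show ?thesis
    by (simp add: exp_minus field_simps)
qed
section \<open>Lower bounds for Metropolis-Hastings kernels and conditional expectations\<close>

lemma mh_accept_ge:
  assumes "0 \<le> p x" "s \<le> 1" "0 < p x \<Longrightarrow> s * p x \<le> p y"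
  shows "s \<le> mh_accept p x y"
  using assms by (auto simp: mh_accept_def field_simps)

lemma mh_kernel_ge_integral:
  assumes x: "x \<in> space lam" and A: "A \<in> sets lam"
    and q: "(\<lambda>y. q x y) \<in> borel_measurable lam" "\<forall>y\<in>space lam. 0 \<le> q x y"
      "(\<integral>\<^sup>+y. ennreal (q x y) \<partial>lam) = 1"
    and p: "p \<in> borel_measurable lam" "\<forall>y\<in>space lam. 0 \<le> p y"
    and f: "integrable lam f" "\<forall>y\<in>A. f y \<le> q x y * mh_accept p x y"
  shows "(\<integral>y. indicator A y * f y \<partial>lam) \<le> mh_kernel lam q p x A"
proof -
  have acc: "0 \<le> mh_accept p x y \<and> mh_accept p x y \<le> 1" if "y \<in> space lam" for y
    using p(2) x that by (auto simp: mh_accept_def)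
  have [measurable]: "(\<lambda>y. mh_accept p x y) \<in> borel_measurable lam"
    using p(1) by (simp add: mh_accept_def)
  have q_int: "integrable lam (\<lambda>y. q x y)"
    using q by (intro integrableI_nn_integral_finite[where x=1]) (auto intro: AE_I2)
  have "(\<integral>y. q x y \<partial>lam) = 1"
    using q by (subst integral_eq_nn_integral) (auto intro: AE_I2)
  have qa_int: "integrable lam (\<lambda>y. q x y * mh_accept p x y)"
    using q acc by (intro Bochner_Integration.integrable_bound[OF q_int]) (auto intro!: AE_I2 mult_left_le)
  have "(\<integral>y. q x y * mh_accept p x y \<partial>lam) \<le> (\<integral>y. q x y \<partial>lam)"
    using q acc by (intro integral_mono[OF qa_int q_int]) (auto intro: mult_left_le)
  then have "0 \<le> indicator A x * (1 - (\<integral>y. q x y * mh_accept p x y \<partial>lam))"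
    using \<open>(\<integral>y. q x y \<partial>lam) = 1\<close> by simp
  moreover have "(\<integral>y. indicator A y * f y \<partial>lam) \<le> (\<integral>y. indicator A y * (q x y * mh_accept p x y) \<partial>lam)"
    using A f qa_int integrable_mult_indicator[OF A f(1)] integrable_mult_indicator[OF A qa_int]
    by (intro integral_mono) (auto split: split_indicator)
  ultimately show ?thesis
    by (simp add: mh_kernel_def)
qed

lemma (in prob_space) integral_indicator_mult_ge_of_cond_exp_ge:
  assumes F: "subalgebra M F" and E: "E \<in> sets F"
    and h: "h \<in> borel_measurable F" "\<forall>w\<in>space M. 0 \<le> h w \<and> h w \<le> B"
    and V [measurable]: "V \<in> borel_measurable M"
    and V_bound: "\<forall>w\<in>space M. \<bar>V w\<bar> \<le> 1"
    and lower: "AE w in M. w \<in> E \<longrightarrow> c \<le> real_cond_exp M F V w"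
  shows "c * (\<integral>w. indicator E w * h w \<partial>M) \<le> (\<integral>w. indicator E w * h w * V w \<partial>M)"
proof -
  interpret finite_measure_subalgebra M F
    using F by unfold_locales
  define g where "g w = indicator E w * h w" for w
  have g_F [measurable]: "g \<in> borel_measurable F"
    using E h(1) unfolding g_def by measurable
  have g_M [measurable]: "g \<in> borel_measurable M"
    using measurable_from_subalg[OF F g_F] .
  have g_bound: "0 \<le> g w \<and> g w \<le> \<bar>B\<bar>" if "w \<in> space M" for w
    using h(2) that by (auto simp: g_def split: split_indicator)
  have "\<bar>g w * V w\<bar> \<le> \<bar>B\<bar>" if "w \<in> space M" for w
  proof -
    have "\<bar>g w * V w\<bar> = g w * \<bar>V w\<bar>"
      using g_bound[OF that] by (simp add: abs_mult)
    also have "\<dots> \<le> g w"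
      using g_bound[OF that] V_bound that by (simp add: mult_left_le)
    finally show ?thesis
      using g_bound[OF that] by linarith
  qed
  then have gV: "integrable M (\<lambda>w. g w * V w)"
    by (intro integrable_const_bound[where B="\<bar>B\<bar>"]) auto
  have "c * (\<integral>w. g w \<partial>M) = (\<integral>w. g w * c \<partial>M)"
    by (simp add: mult.commute)
  also have "\<dots> \<le> (\<integral>w. g w * real_cond_exp M F V w \<partial>M)"
  proof (rule integral_mono_AE)
    show "integrable M (\<lambda>w. g w * c)"
      using g_bound by (intro integrable_mult_left integrable_const_bound[where B="\<bar>B\<bar>"]) auto
    show "integrable M (\<lambda>w. g w * real_cond_exp M F V w)"
      using real_cond_exp_intg(1)[OF gV g_F V] .
    show "AE w in M. g w * c \<le> g w * real_cond_exp M F V w"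
      using lower
    proof (rule AE_mp, intro AE_I2 impI)
      fix w
      assume "w \<in> space M" "w \<in> E \<longrightarrow> c \<le> real_cond_exp M F V w"
      then show "g w * c \<le> g w * real_cond_exp M F V w"
        using h(2) by (auto simp: g_def intro!: mult_left_mono split: split_indicator)
    qed
  qed
  also have "\<dots> = (\<integral>w. g w * V w \<partial>M)"
    using real_cond_exp_intg(2)[OF gV g_F V] .
  finally show ?thesis
    by (simp add: g_def)
qed

lemma (in prob_space) integral_mult_sum_visits_ge:
  fixes E :: "'k::finite \<Rightarrow> 'a set" and V :: "'k \<Rightarrow> 'a \<Rightarrow> real"
  assumes F: "subalgebra M F"
    and E: "\<And>k. E k \<in> sets F" and cover: "\<And>w. w \<in> space M \<Longrightarrow> \<exists>k. w \<in> E k"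
    and h [measurable]: "h \<in> borel_measurable F" and h_bound: "\<forall>w\<in>space M. 0 \<le> h w \<and> h w \<le> B"
    and V [measurable]: "\<And>k. V k \<in> borel_measurable M"
    and V_bound: "\<And>k. \<forall>w\<in>space M. \<bar>V k w\<bar> \<le> 1"
    and lower: "\<And>k. AE w in M. w \<in> E k \<longrightarrow> c \<le> real_cond_exp M F (V k) w" and "0 \<le> c"
  shows "c * (\<integral>w. h w \<partial>M) \<le> (\<integral>w. h w * (\<Sum>k\<in>UNIV. indicator (E k) w * V k w) \<partial>M)"
proof -
  have [measurable]: "h \<in> borel_measurable M" "E k \<in> sets M" for k
    using measurable_from_subalg[OF F h] E F by (auto simp: subalgebra_def)
  have bounded_int: "integrable M f" if [measurable]: "f \<in> borel_measurable M"
    and "\<forall>w\<in>space M. \<bar>f w\<bar> \<le> \<bar>B\<bar>" for f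
    using that by (intro integrable_const_bound[where B="\<bar>B\<bar>"]) auto
  have int_E: "integrable M (\<lambda>w. indicator (E k) w * h w)" for k
    using h_bound by (intro bounded_int) (auto split: split_indicator)
  have int_EV: "integrable M (\<lambda>w. indicator (E k) w * h w * V k w)" for k
  proof (rule bounded_int)
    show "\<forall>w\<in>space M. \<bar>indicator (E k) w * h w * V k w\<bar> \<le> \<bar>B\<bar>"
    proof
      fix w
      assume "w \<in> space M"
      then have "\<bar>indicator (E k) w * h w * V k w\<bar> \<le> \<bar>indicator (E k) w * h w\<bar> * 1"
        using V_bound unfolding abs_mult by (intro mult_left_mono) auto
      also have "\<dots> \<le> \<bar>B\<bar>"
        using h_bound \<open>w \<in> space M\<close> by (auto split: split_indicator)
      finally show "\<bar>indicator (E k) w * h w * V k w\<bar> \<le> \<bar>B\<bar>" .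
    qed
  qed measurable
  have "c * (\<integral>w. h w \<partial>M) \<le> c * (\<integral>w. (\<Sum>k\<in>UNIV. indicator (E k) w * h w) \<partial>M)"
  proof (intro mult_left_mono integral_mono \<open>0 \<le> c\<close>)
    show "integrable M h"
      using h_bound by (intro bounded_int) auto
    show "integrable M (\<lambda>w. \<Sum>k\<in>UNIV. indicator (E k) w * h w)"
      using int_E by (rule Bochner_Integration.integrable_sum)
    fix w
    assume "w \<in> space M"
    then obtain k where "w \<in> E k"
      using cover by blast
    then show "h w \<le> (\<Sum>k\<in>UNIV. indicator (E k) w * h w)"
      using h_bound \<open>w \<in> space M\<close> member_le_sum[of k UNIV "\<lambda>k. indicator (E k) w * h w"]
      by (auto split: split_indicator)
  qed
  also have "\<dots> = (\<Sum>k\<in>UNIV. c * (\<integral>w. indicator (E k) w * h w \<partial>M))"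
    by (subst Bochner_Integration.integral_sum[OF int_E]) (simp only: sum_distrib_left)
  also have "\<dots> \<le> (\<Sum>k\<in>UNIV. \<integral>w. indicator (E k) w * h w * V k w \<partial>M)"
    using F E h_bound V_bound lower
    by (intro sum_mono integral_indicator_mult_ge_of_cond_exp_ge) auto
  also have "\<dots> = (\<integral>w. h w * (\<Sum>k\<in>UNIV. indicator (E k) w * V k w) \<partial>M)"
    by (subst Bochner_Integration.integral_sum[OF int_EV, symmetric]) (simp only: sum_distrib_left mult_ac)
  finally show ?thesis .
qed

lemma (in prob_space) integral_le_of_visit_lower_bound:
  fixes E :: "'k::finite \<Rightarrow> 'a set" and V :: "'k \<Rightarrow> 'a \<Rightarrow> real"
  assumes F: "subalgebra M F"
    and E: "\<And>k. E k \<in> sets F" and cover: "\<And>w. w \<in> space M \<Longrightarrow> \<exists>k. w \<in> E k"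
    and u [measurable]: "u \<in> borel_measurable F" and c [measurable]: "c \<in> borel_measurable F"
    and bounds: "\<And>w. w \<in> space M \<Longrightarrow> 0 \<le> u w \<and> u w \<le> B \<and> 0 \<le> c w \<and> c w \<le> 1"
    and V [measurable]: "\<And>k. V k \<in> borel_measurable M"
    and V_bound: "\<And>k w. w \<in> space M \<Longrightarrow> 0 \<le> V k w \<and> V k w \<le> 1"
    and lower: "\<And>k. AE w in M. w \<in> E k \<longrightarrow> p \<le> real_cond_exp M F (V k) w" and "0 \<le> p"
    and Z [measurable]: "Z \<in> borel_measurable M"
    and Z_bound: "\<And>w. w \<in> space M \<Longrightarrow> 0 \<le> Z w \<and> Z w \<le> u w - u w * c w * (\<Sum>k\<in>UNIV. indicator (E k) w * V k w)"
    and Y: "integrable M Y" "\<And>w. w \<in> space M \<Longrightarrow> u w * (1 - p * c w) \<le> Y w"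
  shows "(\<integral>w. Z w \<partial>M) \<le> (\<integral>w. Y w \<partial>M)"
proof -
  define visits where "visits w = (\<Sum>k\<in>UNIV. indicator (E k) w * V k w)" for w
  have [measurable]: "u \<in> borel_measurable M" "c \<in> borel_measurable M" "E k \<in> sets M" for k
    using measurable_from_subalg[OF F u] measurable_from_subalg[OF F c] E F by (auto simp: subalgebra_def)
  have [measurable]: "visits \<in> borel_measurable M"
    unfolding visits_def by measurable
  have visits: "0 \<le> visits w \<and> visits w \<le> real CARD('k)" if "w \<in> space M" for w
    using V_bound[OF that] sum_mono[of UNIV "\<lambda>k. indicator (E k) w * V k w" "\<lambda>_. 1"]
    by (auto simp: visits_def intro!: sum_nonneg mult_le_one split: split_indicator)
  have uc: "0 \<le> u w * c w \<and> u w * c w \<le> B" if "w \<in> space M" for w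
    using bounds[OF that] mult_left_le[of "c w" "u w"] by auto
  have ucv: "0 \<le> u w * c w * visits w \<and> u w * c w * visits w \<le> B * real CARD('k)" if "w \<in> space M" for w
    using uc[OF that] visits[OF that] mult_mono[of "u w * c w" B "visits w" "real CARD('k)"] by auto
  have int_u: "integrable M u"
    using bounds by (intro integrable_const_bound[where B=B]) auto
  have int_uc: "integrable M (\<lambda>w. u w * c w)"
    using uc by (intro integrable_const_bound[where B=B]) auto
  have int_ucv: "integrable M (\<lambda>w. u w * c w * visits w)"
    using ucv by (intro integrable_const_bound[where B="B * real CARD('k)"]) auto
  have Z_le_u: "0 \<le> Z w \<and> Z w \<le> B" if "w \<in> space M" for w
    using Z_bound[OF that] ucv[OF that] bounds[OF that] by (auto simp: visits_def)
  have int_Z: "integrable M Z"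
    using Z_le_u by (intro integrable_const_bound[where B=B]) auto
  have "(\<integral>w. Z w \<partial>M) \<le> (\<integral>w. u w - u w * c w * visits w \<partial>M)"
    using int_Z int_u int_ucv Z_bound by (intro integral_mono) (auto simp: visits_def)
  also have "\<dots> = (\<integral>w. u w \<partial>M) - (\<integral>w. u w * c w * visits w \<partial>M)"
    using int_u int_ucv by simp
  also have "\<dots> \<le> (\<integral>w. u w \<partial>M) - p * (\<integral>w. u w * c w \<partial>M)"
    using integral_mult_sum_visits_ge[OF F E cover _ _ V _ lower \<open>0 \<le> p\<close>, of "\<lambda>w. u w * c w" B]
      bounds V_bound mult_left_le[of "c _" "u _"] by (fastforce simp: visits_def)
  also have "\<dots> = (\<integral>w. u w - p * (u w * c w) \<partial>M)"
    using int_u int_uc by simp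
  also have "\<dots> \<le> (\<integral>w. Y w \<partial>M)"
    using int_u int_uc Y by (intro integral_mono) (auto simp: algebra_simps)
  finally show ?thesis .
qed

lemma sum_mult_indicator_stratum:
  fixes f :: "'d::finite \<Rightarrow> real"
  assumes "x \<in> space lam"
  shows "(\<Sum>k\<in>UNIV. f k * indicator (stratum lam I k) x) = f (I x)"
proof -
  have "(\<Sum>k\<in>UNIV. f k * indicator (stratum lam I k) x) = (\<Sum>k\<in>UNIV. if k = I x then f k else 0)"
    using assms by (intro sum.cong) (auto simp: stratum_def)
  then show ?thesis
    by simp
qed

section \<open>The Wang-Landau recursion\<close>

declare wl_tilde.simps(2) [simp del]

locale wang_landau = prob_space M
  for M :: "'w measure" +
  fixes F :: "nat \<Rightarrow> 'w measure"
    and lam :: "'a measure" and piX :: "'a \<Rightarrow> real" and q :: "'a \<Rightarrow> 'a \<Rightarrow> real"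
    and I :: "'a \<Rightarrow> 'd::finite" and rho :: "real \<Rightarrow> real"
    and th0 :: "'w \<Rightarrow> real ^ 'd" and X :: "nat \<Rightarrow> 'w \<Rightarrow> 'a" and gam :: "nat \<Rightarrow> 'w \<Rightarrow> real"
  assumes d2: "CARD('d) \<ge> 2"
    and pi_meas: "piX \<in> borel_measurable lam"
    and pi_nonneg: "\<forall>x\<in>space lam. 0 \<le> piX x"
    and pi_prob: "(\<integral>\<^sup>+ x. ennreal (piX x) \<partial>lam) = 1"
    and strata_meas: "\<forall>i. stratum lam I i \<in> sets lam"
    and A1_bdd: "\<exists>B. \<forall>x\<in>space lam. piX x \<le> B"
    and A1_pos: "\<forall>i. theta_star lam piX I i > 0"
    and q_meas: "(\<lambda>(x, y). q x y) \<in> borel_measurable (lam \<Otimes>\<^sub>M lam)"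
    and q_dens: "\<forall>x\<in>space lam. (\<integral>\<^sup>+ y. ennreal (q x y) \<partial>lam) = 1"
    and q_inf: "\<exists>c>0. \<forall>x\<in>space lam. \<forall>y\<in>space lam. c \<le> q x y"
    and rho_meas: "rho \<in> borel_measurable (restrict_space borel {0<..<1})"
    and rho_pos: "\<forall>t\<in>{0<..<1}. 0 < rho t"
    and R2: "\<exists>B. \<forall>t\<in>{0<..<1}. rho t \<le> B"
    and R3_mono: "mono_on {0<..<1} rho"
    and R4_lim: "filterlim (\<lambda>t. rho t / t) at_top (at_right 0)"
    and filt_sub: "\<forall>n. subalgebra M (F n)"
    and filt_mono: "\<forall>n. sets (F n) \<subseteq> sets (F (Suc n))"
    and th0_meas: "th0 \<in> borel_measurable (F 0)"
    and th0_pos: "\<forall>w\<in>space M. \<forall>i. 0 < th0 w $ i"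
    and X_meas: "\<forall>n. X n \<in> measurable (F n) lam"
    and gam_meas: "\<forall>n. gam (Suc n) \<in> borel_measurable (F n)"
    and gam_pos: "\<forall>n\<ge>1. \<forall>w\<in>space M. 0 < gam n w"
    and cond_law: "\<forall>n. \<forall>A\<in>sets lam. AE w in M.
        real_cond_exp M (F n) (\<lambda>w. indicator A (X (Suc n) w)) w
        = mh_kernel lam q (bias_density lam piX I rho (wl_theta rho I th0 gam X n w)) (X n w) A"
    and gam_bound: "\<exists>g::nat \<Rightarrow> real. g \<longlonglongrightarrow> 0 \<and> (\<forall>n\<ge>1. \<forall>w\<in>space M. gam n w \<le> g n)"
begin

abbreviation theta_tilde :: "nat \<Rightarrow> 'w \<Rightarrow> real ^ 'd" where
  "theta_tilde n w \<equiv> wl_tilde rho I th0 gam X n w"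

abbreviation theta :: "nat \<Rightarrow> 'w \<Rightarrow> real ^ 'd" where
  "theta n w \<equiv> wl_theta rho I th0 gam X n w"

abbreviation lyapunov :: "nat \<Rightarrow> 'w \<Rightarrow> real" where
  "lyapunov n w \<equiv> inv_prod (theta n w)"

lemma space_F: "space (F n) = space M"
  using filt_sub by (simp add: subalgebra_def)

lemma measurable_F_mono: "k \<le> n \<Longrightarrow> f \<in> borel_measurable (F k) \<Longrightarrow> f \<in> borel_measurable (F n)"
  using lift_Suc_mono_le[of "\<lambda>n. sets (F n)", OF filt_mono[rule_format]]
  by (auto simp: measurable_def space_F)

lemma measurable_F_M: "f \<in> borel_measurable (F n) \<Longrightarrow> f \<in> borel_measurable M"
  using measurable_from_subalg filt_sub by blast

lemma gam_Suc_pos: "w \<in> space M \<Longrightarrow> 0 < gam (Suc n) w"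
  using gam_pos by simp

lemma X_in_space: "w \<in> space M \<Longrightarrow> X n w \<in> space lam"
  using measurable_space[OF X_meas[rule_format, of n]] by (simp add: space_F)

lemma theta_tilde_Suc:
  "theta_tilde (Suc n) w = (\<chi> i. theta_tilde n w $ i *
     (if i = I (X (Suc n) w) then 1 + gam (Suc n) w * rho (theta n w $ i) / theta n w $ i else 1))"
  by (simp add: wl_tilde.simps(2) Let_def wl_theta_def vec_eq_iff)

lemma theta_tilde_pos: "w \<in> space M \<Longrightarrow> 0 < theta_tilde n w $ i"
proof (induction n arbitrary: i)
  case 0
  then show ?case
    using th0_pos by simp
next
  case (Suc n)
  have "theta n w \<in> wl_Theta"
    using wl_normalize_in_wl_Theta[OF d2] Suc by (simp add: wl_theta_def)
  then have "0 < theta n w $ i" "0 < rho (theta n w $ i)" "0 < gam (Suc n) w"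
    using rho_pos gam_Suc_pos Suc.prems by (auto simp: wl_Theta_def)
  then have "0 < 1 + gam (Suc n) w * rho (theta n w $ i) / theta n w $ i"
    by (intro add_pos_nonneg) auto
  then show ?case
    using Suc by (auto simp: theta_tilde_Suc)
qed

lemma theta_in_wl_Theta: "w \<in> space M \<Longrightarrow> theta n w \<in> wl_Theta"
  using wl_normalize_in_wl_Theta[OF d2] theta_tilde_pos by (simp add: wl_theta_def)

lemma theta_pos: "w \<in> space M \<Longrightarrow> 0 < theta n w $ i \<and> theta n w $ i < 1"
  using theta_in_wl_Theta by (simp add: wl_Theta_def)

lemma lyapunov_Suc:
  fixes n :: nat
  assumes w: "w \<in> space M"
  defines "k \<equiv> I (X (Suc n) w)"
  defines "t \<equiv> theta n w $ k"
  shows "lyapunov (Suc n) w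
    = lyapunov n w * (1 + gam (Suc n) w * rho t) ^ CARD('d) / (1 + gam (Suc n) w * rho t / t)"
proof -
  define a where "a = gam (Suc n) w * rho t"
  have "0 \<le> a"
    using rho_pos theta_pos[OF w] gam_Suc_pos[OF w] by (auto simp: a_def t_def intro!: mult_nonneg_nonneg less_imp_le)
  have "theta_tilde (Suc n) w = (\<chi> i. theta_tilde n w $ i *
      (if i = k then 1 + a / wl_normalize (theta_tilde n w) $ k else 1))"
    by (auto simp: theta_tilde_Suc vec_eq_iff t_def k_def a_def wl_theta_def)
  then have "lyapunov (Suc n) w = inv_prod (wl_normalize (theta_tilde n w)) * (1 + a) ^ CARD('d)
      / (1 + a / wl_normalize (theta_tilde n w) $ k)"
    unfolding wl_theta_def
    using inv_prod_wl_normalize_scale[of "theta_tilde n w" a k] theta_tilde_pos[OF w] \<open>0 \<le> a\<close> by simp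
  then show ?thesis
    by (simp add: a_def t_def wl_theta_def)
qed

lemma X_measurable_M [measurable]: "X n \<in> M \<rightarrow>\<^sub>M lam"
  using measurable_from_subalg[OF filt_sub[rule_format] X_meas[rule_format]] .

lemma stratum_sets [measurable]: "stratum lam I k \<in> sets lam"
  using strata_meas by simp

lemma gam_Suc_measurable [measurable]: "gam (Suc n) \<in> borel_measurable (F n)"
  using gam_meas by simp

lemma theta_measurable_of_theta_tilde:
  assumes "\<And>j. (\<lambda>w. theta_tilde n w $ j) \<in> borel_measurable N"
  shows "(\<lambda>w. theta n w $ i) \<in> borel_measurable N"
  using assms by (simp add: wl_theta_def nth_wl_normalize)

lemma theta_tilde_measurable: "(\<lambda>w. theta_tilde n w $ i) \<in> borel_measurable (F n)"
proof (induction n arbitrary: i)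
  case 0
  show ?case
    using borel_measurable_continuous_on[OF linear_continuous_on[OF bounded_linear_vec_nth] th0_meas]
    by simp
next
  case (Suc n)
  have [measurable]: "(\<lambda>w. theta_tilde n w $ j) \<in> borel_measurable (F (Suc n))" for j
    using Suc by (intro measurable_F_mono[of n "Suc n"]) auto
  then have theta_meas [measurable]: "(\<lambda>w. theta n w $ i) \<in> borel_measurable (F (Suc n))"
    by (rule theta_measurable_of_theta_tilde)
  have "(\<lambda>w. theta n w $ i) \<in> F (Suc n) \<rightarrow>\<^sub>M restrict_space borel {0<..<1}"
    using theta_pos by (intro measurable_restrict_space2[OF _ theta_meas]) (auto simp: space_F)
  then have [measurable]: "(\<lambda>w. rho (theta n w $ i)) \<in> borel_measurable (F (Suc n))"
    using rho_meas by (rule measurable_compose)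
  have [measurable]: "gam (Suc n) \<in> borel_measurable (F (Suc n))"
    by (intro measurable_F_mono[of n "Suc n"] gam_Suc_measurable) simp
  have [measurable]: "X (Suc n) \<in> F (Suc n) \<rightarrow>\<^sub>M lam"
    using X_meas by simp
  have "theta_tilde (Suc n) w $ i = theta_tilde n w $ i * (if X (Suc n) w \<in> stratum lam I i
      then 1 + gam (Suc n) w * rho (theta n w $ i) / theta n w $ i else 1)" if "w \<in> space (F (Suc n))" for w
    using X_in_space[of w "Suc n"] that by (auto simp: theta_tilde_Suc stratum_def space_F)
  then show ?case
    by (subst measurable_cong) measurable
qed

lemma theta_measurable: "(\<lambda>w. theta n w $ i) \<in> borel_measurable (F n)"
  using theta_tilde_measurable by (rule theta_measurable_of_theta_tilde)

lemma lyapunov_measurable: "lyapunov n \<in> borel_measurable (F n)"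
  using theta_measurable by (simp add: inv_prod_def)

lemma lyapunov_measurable_M [measurable]: "lyapunov n \<in> borel_measurable M"
  using measurable_F_M[OF lyapunov_measurable] .

lemma bias_Z_pos: "v \<in> wl_Theta \<Longrightarrow> 0 < bias_Z lam piX I rho v"
  using A1_pos rho_pos unfolding bias_Z_def wl_Theta_def by (intro sum_pos) auto

lemma bias_density_measurable: "bias_density lam piX I rho v \<in> borel_measurable lam"
proof -
  have "I \<in> lam \<rightarrow>\<^sub>M count_space UNIV"
    using strata_meas by (auto simp: measurable_count_space_eq2 stratum_def vimage_def Int_def conj_commute)
  then have "(\<lambda>x. rho (v $ I x)) \<in> borel_measurable lam"
    by (rule measurable_compose) simp
  then show ?thesis
    unfolding bias_density_def[abs_def] using pi_meas by measurable
qed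

lemma bias_density_nonneg: "v \<in> wl_Theta \<Longrightarrow> x \<in> space lam \<Longrightarrow> 0 \<le> bias_density lam piX I rho v x"
  using pi_nonneg rho_pos bias_Z_pos unfolding bias_density_def wl_Theta_def
  by (simp add: divide_nonneg_pos)

text \<open>R3 makes a stratum of smallest weight the least penalised one, so moves into it are accepted
  with probability at least \<open>piX y / B\<close>.\<close>

lemma mh_accept_least_stratum_ge:
  assumes v: "v \<in> wl_Theta" and x: "x \<in> space lam" and y: "y \<in> stratum lam I k"
    and least: "\<forall>j. v $ k \<le> v $ j" and B: "\<forall>x\<in>space lam. piX x \<le> B" "0 < B"
  shows "piX y / B \<le> mh_accept (bias_density lam piX I rho v) x y"
proof (rule mh_accept_ge)
  let ?p = "bias_density lam piX I rho v"
  have y': "y \<in> space lam" "I y = k"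
    using y by (auto simp: stratum_def)
  have Z: "0 < bias_Z lam piX I rho v"
    using bias_Z_pos[OF v] .
  have v01: "0 < v $ i \<and> v $ i < 1" for i
    using v by (simp add: wl_Theta_def)
  have rho_k: "0 < rho (v $ k)" "rho (v $ k) \<le> rho (v $ I x)"
    using rho_pos R3_mono least v01 by (auto simp: mono_on_def)
  show "0 \<le> ?p x"
    using bias_density_nonneg[OF v x] .
  show "piX y / B \<le> 1"
    using B y' by simp
  assume "0 < ?p x"
  have "piX y / B * ?p x = piX y * (piX x / B) / rho (v $ I x) / bias_Z lam piX I rho v"
    by (simp add: bias_density_def)
  also have "\<dots> \<le> piX y / rho (v $ I x) / bias_Z lam piX I rho v"
    using B x y' pi_nonneg rho_k Z
    by (intro divide_right_mono mult_left_le) (auto simp: less_imp_le)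
  also have "\<dots> \<le> piX y / rho (v $ k) / bias_Z lam piX I rho v"
    using y' pi_nonneg rho_k Z
    by (intro divide_right_mono divide_left_mono[OF rho_k(2)]) (auto intro: mult_pos_pos less_le_trans)
  also have "\<dots> = ?p y"
    using y' by (simp add: bias_density_def)
  finally show "piX y / B * ?p x \<le> ?p y" .
qed

definition least_visit_lower_bound :: "real \<Rightarrow> bool" where
  "least_visit_lower_bound p \<longleftrightarrow> (\<forall>v\<in>wl_Theta. \<forall>x\<in>space lam. \<forall>k. (\<forall>j. v $ k \<le> v $ j) \<longrightarrow>
     p \<le> mh_kernel lam q (bias_density lam piX I rho v) x (stratum lam I k))"

lemma visit_least_stratum_ge:
  assumes v: "v \<in> wl_Theta" and x: "x \<in> space lam" and least: "\<forall>j. v $ k \<le> v $ j"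
    and c: "0 < c" "\<forall>x\<in>space lam. \<forall>y\<in>space lam. c \<le> q x y"
    and B: "\<forall>x\<in>space lam. piX x \<le> B" "0 < B"
  shows "c * theta_star lam piX I k / B \<le> mh_kernel lam q (bias_density lam piX I rho v) x (stratum lam I k)"
proof -
  have "integrable lam piX"
    using pi_meas pi_nonneg pi_prob by (intro integrableI_nn_integral_finite[where x=1]) (auto intro: AE_I2)
  then have "integrable lam (\<lambda>y. c / B * piX y)"
    by simp
  moreover have "c / B * piX y \<le> q x y * mh_accept (bias_density lam piX I rho v) x y"
    if "y \<in> stratum lam I k" for y
  proof -
    have "y \<in> space lam"
      using that by (simp add: stratum_def)
    then have "c * (piX y / B) \<le> q x y * mh_accept (bias_density lam piX I rho v) x y"
      using c x pi_nonneg B mh_accept_least_stratum_ge[OF v x that least B]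
      by (intro mult_mono) (auto intro: order.trans[OF less_imp_le])
    then show ?thesis
      by simp
  qed
  ultimately have "(\<integral>y. indicator (stratum lam I k) y * (c / B * piX y) \<partial>lam)
      \<le> mh_kernel lam q (bias_density lam piX I rho v) x (stratum lam I k)"
    using x strata_meas q_meas q_dens c bias_density_measurable bias_density_nonneg[OF v]
    by (intro mh_kernel_ge_integral) (auto intro: measurable_Pair2[OF q_meas, simplified] less_imp_le order.trans)
  then show ?thesis
    by (simp add: theta_star_def mult_ac)
qed

lemma ex_least_visit_lower_bound: "\<exists>p>0. least_visit_lower_bound p"
proof -
  obtain c where c: "0 < c" "\<forall>x\<in>space lam. \<forall>y\<in>space lam. c \<le> q x y"
    using q_inf by blast
  obtain B0 where B0: "\<forall>x\<in>space lam. piX x \<le> B0"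
    using A1_bdd by blast
  define B where "B = max 1 B0"
  have B: "\<forall>x\<in>space lam. piX x \<le> B" "0 < B"
    using B0 by (auto simp: B_def intro: le_max_iff_disj[THEN iffD2])
  define m where "m = Min (range (theta_star lam piX I))"
  have "0 < m"
    using A1_pos by (simp add: m_def)
  have "c * m / B \<le> c * theta_star lam piX I k / B" for k
    using c B by (intro divide_right_mono mult_left_mono) (auto simp: m_def)
  then have "least_visit_lower_bound (c * m / B)"
    using visit_least_stratum_ge[OF _ _ _ c B] unfolding least_visit_lower_bound_def by (blast intro: order.trans)
  moreover have "0 < c * m / B"
    using c(1) \<open>0 < m\<close> B(2) by simp
  ultimately show ?thesis
    by blast
qed

lemma lyapunov_pos: "w \<in> space M \<Longrightarrow> 0 < lyapunov n w"
  using theta_pos by (simp add: inv_prod_pos)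

lemma lyapunov_Suc_le:
  fixes n :: nat and Rb :: real
  assumes w: "w \<in> space M" and Rb: "\<forall>t\<in>{0<..<1}. rho t \<le> Rb"
  defines "t \<equiv> theta n w $ I (X (Suc n) w)"
  shows "lyapunov (Suc n) w
    \<le> exp (real CARD('d) * Rb * gam (Suc n) w) * lyapunov n w / (1 + gam (Suc n) w * rho t / t)"
proof -
  let ?g = "gam (Suc n) w"
  have t: "0 < t" "t < 1" "0 < rho t" "rho t \<le> Rb"
    using theta_pos[OF w] rho_pos Rb by (auto simp: t_def)
  have "0 < ?g"
    using gam_Suc_pos[OF w] .
  have "(1 + ?g * rho t) ^ CARD('d) \<le> exp (CARD('d) * (?g * rho t))"
    using \<open>0 < ?g\<close> t by (intro one_plus_power_le_exp) simp
  also have "\<dots> \<le> exp (real CARD('d) * Rb * ?g)"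
    using \<open>0 < ?g\<close> t by (simp add: mult_left_mono mult.commute mult.left_commute)
  finally have "lyapunov n w * (1 + ?g * rho t) ^ CARD('d) \<le> lyapunov n w * exp (real CARD('d) * Rb * ?g)"
    by (intro mult_left_mono less_imp_le[OF lyapunov_pos[OF w]])
  moreover have "0 < 1 + ?g * rho t / t"
    using \<open>0 < ?g\<close> t by (simp add: add_pos_nonneg)
  ultimately show ?thesis
    using lyapunov_Suc[OF w, of n] by (simp add: t_def divide_right_mono mult.commute)
qed

lemma lyapunov_Suc_le_growth:
  fixes Rb :: real
  assumes w: "w \<in> space M" and Rb: "\<forall>t\<in>{0<..<1}. rho t \<le> Rb"
  shows "lyapunov (Suc n) w \<le> exp (real CARD('d) * Rb * gam (Suc n) w) * lyapunov n w"
proof -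
  let ?t = "theta n w $ I (X (Suc n) w)"
  have "0 < ?t" "0 < rho ?t" "0 < gam (Suc n) w"
    using theta_pos[OF w] rho_pos gam_Suc_pos[OF w] by auto
  then have "1 \<le> 1 + gam (Suc n) w * rho ?t / ?t"
    by simp
  moreover have "0 \<le> exp (real CARD('d) * Rb * gam (Suc n) w) * lyapunov n w"
    using lyapunov_pos[OF w, of n] by simp
  ultimately have "exp (real CARD('d) * Rb * gam (Suc n) w) * lyapunov n w / (1 + gam (Suc n) w * rho ?t / ?t)
      \<le> exp (real CARD('d) * Rb * gam (Suc n) w) * lyapunov n w / 1"
    by (intro divide_left_mono) auto
  then show ?thesis
    using lyapunov_Suc_le[OF w Rb, of n] by simp
qed

lemma lyapunov_Suc_le_contraction:
  fixes Rb L t0 :: real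
  assumes w: "w \<in> space M" and Rb: "\<forall>t\<in>{0<..<1}. rho t \<le> Rb"
    and L: "0 \<le> L" and t0: "0 < t0" "\<forall>t\<in>{0<..<1}. t \<le> t0 \<longrightarrow> L \<le> rho t / t"
    and large: "(1 / t0) ^ CARD('d) \<le> lyapunov n w"
    and least: "\<forall>j. theta n w $ I (X (Suc n) w) \<le> theta n w $ j"
  shows "lyapunov (Suc n) w \<le> exp (real CARD('d) * Rb * gam (Suc n) w) * lyapunov n w / (1 + gam (Suc n) w * L)"
proof -
  let ?t = "theta n w $ I (X (Suc n) w)" and ?g = "gam (Suc n) w"
  have "?t \<le> t0"
    using min_le_of_inv_prod_ge[OF _ least t0(1) large] theta_pos[OF w] by blast
  moreover have "0 < ?t" "?t < 1" "0 < ?g"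
    using theta_pos[OF w] gam_Suc_pos[OF w] by auto
  ultimately have "L \<le> rho ?t / ?t"
    using t0(2) by simp
  then have le: "1 + ?g * L \<le> 1 + ?g * rho ?t / ?t"
    using mult_left_mono[of L "rho ?t / ?t" ?g] \<open>0 < ?g\<close> by simp
  have pos: "0 < 1 + ?g * L"
    using L \<open>0 < ?g\<close> by (simp add: add_pos_nonneg)
  have "0 \<le> exp (real CARD('d) * Rb * ?g) * lyapunov n w"
    using lyapunov_pos[OF w, of n] by simp
  then have "exp (real CARD('d) * Rb * ?g) * lyapunov n w / (1 + ?g * rho ?t / ?t)
      \<le> exp (real CARD('d) * Rb * ?g) * lyapunov n w / (1 + ?g * L)"
    using le pos by (intro divide_left_mono mult_pos_pos) auto
  then show ?thesis
    using lyapunov_Suc_le[OF w Rb, of n] by linarith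
qed

definition least_stratum_event :: "nat \<Rightarrow> 'd \<Rightarrow> 'w set" where
  "least_stratum_event n k = {w\<in>space M. \<forall>j. theta n w $ k \<le> theta n w $ j}"

lemma sets_least_stratum_event: "least_stratum_event n k \<in> sets (F n)"
proof -
  have [measurable]: "(\<lambda>w. theta n w $ j) \<in> borel_measurable (F n)" for j
    by (rule theta_measurable)
  have "least_stratum_event n k = (\<Inter>j. {w\<in>space (F n). theta n w $ k \<le> theta n w $ j}) \<inter> space (F n)"
    by (auto simp: least_stratum_event_def space_F)
  also have "\<dots> \<in> sets (F n)"
    by measurable
  finally show ?thesis .
qed

lemma least_stratum_event_cover: "w \<in> space M \<Longrightarrow> \<exists>k. w \<in> least_stratum_event n k"
proof -
  assume "w \<in> space M"
  have "Min (range (\<lambda>j. theta n w $ j)) \<in> range (\<lambda>j. theta n w $ j)"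
    by (intro Min_in) auto
  then obtain k where "theta n w $ k = Min (range (\<lambda>j. theta n w $ j))"
    by (metis rangeE)
  then show ?thesis
    using \<open>w \<in> space M\<close> by (auto simp: least_stratum_event_def intro!: exI[of _ k])
qed

lemma lyapunov_Suc_le_visit:
  fixes Rb L t0 :: real
  assumes w: "w \<in> space M" and Rb: "\<forall>t\<in>{0<..<1}. rho t \<le> Rb"
    and L: "0 \<le> L" and t0: "0 < t0" "\<forall>t\<in>{0<..<1}. t \<le> t0 \<longrightarrow> L \<le> rho t / t"
    and large: "(1 / t0) ^ CARD('d) \<le> lyapunov n w"
  defines "u \<equiv> exp (real CARD('d) * Rb * gam (Suc n) w) * lyapunov n w"
  defines "c \<equiv> gam (Suc n) w * L / (1 + gam (Suc n) w * L)"
  shows "lyapunov (Suc n) w \<le> u - u * c *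
    (\<Sum>k\<in>UNIV. indicator (least_stratum_event n k) w * indicator (stratum lam I k) (X (Suc n) w))"
proof -
  let ?k = "I (X (Suc n) w)"
  have sum: "(\<Sum>k\<in>UNIV. indicator (least_stratum_event n k) w * indicator (stratum lam I k) (X (Suc n) w))
      = (indicator (least_stratum_event n ?k) w :: real)"
    using sum_mult_indicator_stratum[OF X_in_space[OF w]] .
  show ?thesis
  proof (cases "w \<in> least_stratum_event n ?k")
    case True
    then have "\<forall>j. theta n w $ ?k \<le> theta n w $ j"
      by (simp add: least_stratum_event_def)
    then have "lyapunov (Suc n) w \<le> u / (1 + gam (Suc n) w * L)"
      unfolding u_def by (rule lyapunov_Suc_le_contraction[OF w Rb L t0 large])
    also have "\<dots> = u - u * c"
    proof -
      have "0 < gam (Suc n) w"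
        using gam_Suc_pos[OF w] .
      then have "0 < 1 + gam (Suc n) w * L"
        using L by (simp add: add_pos_nonneg)
      then show ?thesis
        by (simp add: c_def field_simps)
    qed
    finally show ?thesis
      using True sum by simp
  next
    case False
    then show ?thesis
      using lyapunov_Suc_le_growth[OF w Rb, of n] sum by (simp add: u_def)
  qed
qed

lemma AE_cond_visit_least_stratum_ge:
  assumes "least_visit_lower_bound p"
  shows "AE w in M. w \<in> least_stratum_event n k \<longrightarrow>
    p \<le> real_cond_exp M (F n) (\<lambda>w. indicator (stratum lam I k) (X (Suc n) w)) w"
proof -
  have "AE w in M. real_cond_exp M (F n) (\<lambda>w. indicator (stratum lam I k) (X (Suc n) w)) w
      = mh_kernel lam q (bias_density lam piX I rho (theta n w)) (X n w) (stratum lam I k)"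
    using cond_law[rule_format, of "stratum lam I k" n] strata_meas by simp
  then show ?thesis
  proof (rule AE_mp, intro AE_I2 impI)
    fix w
    assume "w \<in> space M"
      and "real_cond_exp M (F n) (\<lambda>w. indicator (stratum lam I k) (X (Suc n) w)) w
        = mh_kernel lam q (bias_density lam piX I rho (theta n w)) (X n w) (stratum lam I k)"
      and "w \<in> least_stratum_event n k"
    then show "p \<le> real_cond_exp M (F n) (\<lambda>w. indicator (stratum lam I k) (X (Suc n) w)) w"
      using assms theta_in_wl_Theta X_in_space by (simp add: least_visit_lower_bound_def least_stratum_event_def)
  qed
qed

text \<open>A visit to a stratum of smallest weight, which has conditional probability at least \<open>p\<close>,
  divides the worst-case growth \<open>exp (A \<gamma>)\<close> by \<open>1 + \<gamma> L\<close>; since \<open>2 A \<le> p L\<close> and \<open>2 A \<gamma> \<le> p\<close>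
  this wins on average.\<close>

lemma lyapunov_supermartingale_step:
  fixes Rb L t0 p B :: real
  assumes p: "0 < p" and visit: "least_visit_lower_bound p"
    and Rb: "0 \<le> Rb" "\<forall>t\<in>{0<..<1}. rho t \<le> Rb"
    and L: "2 * (real CARD('d) * Rb) \<le> p * L"
    and t0: "0 < t0" "\<forall>t\<in>{0<..<1}. t \<le> t0 \<longrightarrow> L \<le> rho t / t"
    and small: "\<forall>w\<in>space M. 2 * (real CARD('d) * Rb) * gam (Suc n) w \<le> p"
    and G: "G \<in> sets (F n)" "\<forall>w\<in>G. (1 / t0) ^ CARD('d) \<le> lyapunov n w" "\<forall>w\<in>G. lyapunov n w \<le> B"
  shows "(\<integral>w. indicator G w * lyapunov (Suc n) w \<partial>M) \<le> (\<integral>w. indicator G w * lyapunov n w \<partial>M)"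
proof -
  define A where "A = real CARD('d) * Rb"
  have "0 \<le> A"
    using Rb(1) by (simp add: A_def)
  then have "0 \<le> p * L"
    using L by (simp add: A_def)
  then have "0 \<le> L"
    using p by (simp add: zero_le_mult_iff)
  define u where "u w = indicator G w * (exp (A * gam (Suc n) w) * lyapunov n w)" for w
  define c where "c w = gam (Suc n) w * L / (1 + gam (Suc n) w * L)" for w
  define V :: "'d \<Rightarrow> 'w \<Rightarrow> real" where "V k w = indicator (stratum lam I k) (X (Suc n) w)" for k w
  have [measurable]: "G \<in> sets (F n)" "G \<in> sets M" "lyapunov n \<in> borel_measurable (F n)"
    using G(1) filt_sub lyapunov_measurable by (auto simp: subalgebra_def)
  have bounds: "0 \<le> u w \<and> u w \<le> exp (p / 2) * \<bar>B\<bar> \<and> 0 \<le> c w \<and> c w \<le> 1" if "w \<in> space M" for w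
  proof -
    have "A * gam (Suc n) w \<le> p / 2"
      using small that unfolding A_def by auto
    then have "exp (A * gam (Suc n) w) \<le> exp (p / 2)"
      by simp
    then have "exp (A * gam (Suc n) w) * lyapunov n w \<le> exp (p / 2) * \<bar>B\<bar>" if "w \<in> G"
      using G(3) that lyapunov_pos[OF \<open>w \<in> space M\<close>, of n] by (intro mult_mono) auto
    moreover have "0 \<le> gam (Suc n) w * L"
      using gam_Suc_pos[OF that, of n] \<open>0 \<le> L\<close> by simp
    ultimately show ?thesis
      using lyapunov_pos[OF that, of n] by (simp add: u_def c_def split: split_indicator)
  qed
  have "\<bar>indicator G w * lyapunov n w\<bar> \<le> \<bar>B\<bar>" if "w \<in> space M" for w
    using G(3) lyapunov_pos[OF that, of n] by (force split: split_indicator)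
  then have int_Y: "integrable M (\<lambda>w. indicator G w * lyapunov n w)"
    by (intro integrable_const_bound[where B="\<bar>B\<bar>"]) auto
  show ?thesis
  proof (rule integral_le_of_visit_lower_bound[OF filt_sub[rule_format] sets_least_stratum_event
        least_stratum_event_cover _ _ bounds _ _ _ less_imp_le[OF p]])
    show "u \<in> borel_measurable (F n)" "c \<in> borel_measurable (F n)"
      unfolding u_def[abs_def] c_def[abs_def] by measurable
    show "V k \<in> borel_measurable M" for k
      unfolding V_def by measurable
    show "0 \<le> V k w \<and> V k w \<le> 1" for k w
      by (simp add: V_def)
    show "AE w in M. w \<in> least_stratum_event n k \<longrightarrow> p \<le> real_cond_exp M (F n) (V k) w" for k
      unfolding V_def[abs_def] by (intro AE_cond_visit_least_stratum_ge visit)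
    show "integrable M (\<lambda>w. indicator G w * lyapunov n w)"
      by (fact int_Y)
    fix w
    assume w: "w \<in> space M"
    show "0 \<le> indicator G w * lyapunov (Suc n) w \<and> indicator G w * lyapunov (Suc n) w
        \<le> u w - u w * c w * (\<Sum>k\<in>UNIV. indicator (least_stratum_event n k) w * V k w)"
      using lyapunov_Suc_le_visit[OF w Rb(2) \<open>0 \<le> L\<close> t0, of n] G(2) lyapunov_pos[OF w, of "Suc n"]
      by (cases "w \<in> G") (auto simp: u_def c_def V_def A_def)
    have "exp (A * gam (Suc n) w) * (1 - p * c w) \<le> 1"
      unfolding c_def using small w \<open>0 \<le> A\<close> \<open>0 \<le> L\<close> L gam_Suc_pos[OF w, of n]
      by (intro exp_mult_contraction_le_one) (auto simp: A_def)
    then have "indicator G w * lyapunov n w * (exp (A * gam (Suc n) w) * (1 - p * c w))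
        \<le> indicator G w * lyapunov n w * 1"
      using lyapunov_pos[OF w, of n] by (intro mult_left_mono) auto
    then show "u w * (1 - p * c w) \<le> indicator G w * lyapunov n w"
      by (simp add: u_def algebra_simps)
  qed measurable
qed

lemma rho_div_ge_near_zero:
  obtains t0 where "0 < t0" "\<forall>t\<in>{0<..<1}. t \<le> t0 \<longrightarrow> L \<le> rho t / t"
proof -
  obtain b where "0 < b" "\<forall>t>0. t < b \<longrightarrow> L \<le> rho t / t"
    using R4_lim[unfolded filterlim_at_top, rule_format, of L] by (auto simp: eventually_at_right_field)
  then show ?thesis
    by (intro that[of "b / 2"]) auto
qed

lemma gam_eventually_le: "0 < e \<Longrightarrow> \<exists>N0. \<forall>n\<ge>N0. \<forall>w\<in>space M. gam (Suc n) w \<le> e"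
proof -
  assume "0 < e"
  obtain g where g: "g \<longlonglongrightarrow> 0" "\<forall>n\<ge>1. \<forall>w\<in>space M. gam n w \<le> g n"
    using gam_bound by blast
  obtain N0 where N0: "\<forall>n\<ge>N0. g (Suc n) < e"
    using order_tendstoD(2)[OF LIMSEQ_Suc[OF g(1)] \<open>0 < e\<close>] by (auto simp: eventually_sequentially)
  show ?thesis
  proof (intro exI allI impI ballI)
    fix n w
    assume "N0 \<le> n" "w \<in> space M"
    then show "gam (Suc n) w \<le> e"
      using g(2)[rule_format, of "Suc n" w] N0[rule_format, of n] by simp
  qed
qed

lemma gam_bounded: "\<exists>K. \<forall>n. \<forall>w\<in>space M. gam (Suc n) w \<le> K"
proof -
  obtain g where g: "g \<longlonglongrightarrow> 0" "\<forall>n\<ge>1. \<forall>w\<in>space M. gam n w \<le> g n"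
    using gam_bound by blast
  obtain K where K: "\<And>n. g n \<le> K"
    using convergent_imp_Bseq[of g] g(1) by (auto simp: convergent_def Bseq_def abs_le_iff)
  show ?thesis
  proof (intro exI allI ballI)
    fix n w
    assume "w \<in> space M"
    then show "gam (Suc n) w \<le> K"
      using g(2)[rule_format, of "Suc n" w] K[of "Suc n"] by simp
  qed
qed

lemma AE_frequently_lyapunov_le: "AE w in M. \<exists>H. \<exists>\<^sub>F n in sequentially. lyapunov n w \<le> H"
proof -
  obtain p where p: "0 < p" and visit: "least_visit_lower_bound p"
    using ex_least_visit_lower_bound by blast
  obtain Rb where Rb: "0 < Rb" "\<forall>t\<in>{0<..<1}. rho t \<le> Rb"
  proof -
    obtain B where "\<forall>t\<in>{0<..<1}. rho t \<le> B"
      using R2 by blast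
    then show ?thesis
      by (intro that[of "max 1 B"]) auto
  qed
  define A where "A = real CARD('d) * Rb"
  have "0 < A"
    using Rb by (simp add: A_def)
  obtain t0 where t0: "0 < t0" "\<forall>t\<in>{0<..<1}. t \<le> t0 \<longrightarrow> 2 * A / p \<le> rho t / t"
    by (rule rho_div_ge_near_zero)
  obtain N0 where N0: "\<forall>n\<ge>N0. \<forall>w\<in>space M. gam (Suc n) w \<le> p / (2 * A)"
    using gam_eventually_le[of "p / (2 * A)"] p \<open>0 < A\<close> by auto
  obtain K where K: "\<forall>n. \<forall>w\<in>space M. gam (Suc n) w \<le> K"
    using gam_bounded by blast
  interpret supermartingale_above_level M F lyapunov "exp (A * K)" "(1 / t0) ^ CARD('d)" N0
  proof
    fix n w
    assume w: "w \<in> space M"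
    show "0 \<le> lyapunov n w"
      using lyapunov_pos[OF w] by (rule less_imp_le)
    have "exp (A * gam (Suc n) w) \<le> exp (A * K)"
      using \<open>0 < A\<close> K w by simp
    then show "lyapunov (Suc n) w \<le> exp (A * K) * lyapunov n w"
      using lyapunov_Suc_le_growth[OF w Rb(2), of n] mult_right_mono[OF _ less_imp_le[OF lyapunov_pos[OF w, of n]]]
      unfolding A_def by (blast intro: order.trans)
  next
    fix n G B
    assume "N0 \<le> n" "G \<in> sets (F n)" "\<forall>w\<in>G. (1 / t0) ^ CARD('d) \<le> lyapunov n w"
      "\<forall>w\<in>G. lyapunov n w \<le> B"
    moreover have "\<forall>w\<in>space M. 2 * A * gam (Suc n) w \<le> p"
      using N0 \<open>N0 \<le> n\<close> \<open>0 < A\<close> by (simp add: field_simps)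
    ultimately show "(\<integral>w. indicator G w * lyapunov (Suc n) w \<partial>M) \<le> (\<integral>w. indicator G w * lyapunov n w \<partial>M)"
      using p Rb t0
      by (intro lyapunov_supermartingale_step[OF p visit less_imp_le[OF Rb(1)] Rb(2) _ t0])
        (auto simp: A_def)
  qed (use filt_sub filt_mono lyapunov_measurable in auto)
  show ?thesis
    by (rule AE_frequently_bounded)
qed

end

theorem proposition3p4:
  fixes M :: "'w measure" and F :: "nat \<Rightarrow> 'w measure"
    and lam :: "(real ^ 'D::finite) measure" and Xs :: "(real ^ 'D) set"
    and piX :: "real ^ 'D \<Rightarrow> real" and q :: "real ^ 'D \<Rightarrow> real ^ 'D \<Rightarrow> real"
    and I :: "real ^ 'D \<Rightarrow> 'd::finite" and rho :: "real \<Rightarrow> real"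
    and th0 :: "'w \<Rightarrow> real ^ 'd" and X :: "nat \<Rightarrow> 'w \<Rightarrow> real ^ 'D"
    and gam :: "nat \<Rightarrow> 'w \<Rightarrow> real"
  assumes d2: "CARD('d) \<ge> 2"
    and Xs_meas: "Xs \<in> sets borel"
    and lam_sets: "sets lam = sets (restrict_space borel Xs)"
    and pi_meas: "piX \<in> borel_measurable lam"
    and pi_nonneg: "\<forall>x\<in>space lam. 0 \<le> piX x"
    and pi_prob: "(\<integral>\<^sup>+ x. ennreal (piX x) \<partial>lam) = 1"
    and strata_meas: "\<forall>i. stratum lam I i \<in> sets lam"
    and A1_bdd: "\<exists>B. \<forall>x\<in>space lam. piX x \<le> B"
    and A1_pos: "\<forall>i. theta_star lam piX I i > 0"
    and q_meas: "(\<lambda>(x, y). q x y) \<in> borel_measurable (lam \<Otimes>\<^sub>M lam)"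
    and q_sym: "\<forall>x\<in>space lam. \<forall>y\<in>space lam. q x y = q y x"
    and q_dens: "\<forall>x\<in>space lam. (\<integral>\<^sup>+ y. ennreal (q x y) \<partial>lam) = 1"
    and q_inf: "\<exists>c>0. \<forall>x\<in>space lam. \<forall>y\<in>space lam. c \<le> q x y"
    and rho_meas: "rho \<in> borel_measurable (restrict_space borel {0<..<1})"
    and rho_pos: "\<forall>t\<in>{0<..<1}. 0 < rho t"
    and R2: "\<exists>B. \<forall>t\<in>{0<..<1}. rho t \<le> B"
    and R3_mono: "mono_on {0<..<1} rho"
    and R3_ratio: "\<exists>R>1. \<exists>c>0. \<forall>t\<in>{0<..<1/R}. c \<le> rho t / rho (R * t)"
    and R4_anti: "antimono_on {0<..<1} (\<lambda>t. rho t / t)"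
    and R4_lim: "filterlim (\<lambda>t. rho t / t) at_top (at_right 0)"
    and prob: "prob_space M"
    and filt_sub: "\<forall>n. subalgebra M (F n)"
    and filt_mono: "\<forall>n. sets (F n) \<subseteq> sets (F (Suc n))"
    and th0_meas: "th0 \<in> borel_measurable (F 0)"
    and th0_pos: "\<forall>w\<in>space M. \<forall>i. 0 < th0 w $ i"
    and X_meas: "\<forall>n. X n \<in> measurable (F n) lam"
    and gam_meas: "\<forall>n. gam (Suc n) \<in> borel_measurable (F n)"
    and gam_pos: "\<forall>n\<ge>1. \<forall>w\<in>space M. 0 < gam n w"
    and cond_law: "\<forall>n. \<forall>A\<in>sets lam. AE w in M.
        real_cond_exp M (F n) (\<lambda>w. indicator A (X (Suc n) w)) w
        = mh_kernel lam q (bias_density lam piX I rho (wl_theta rho I th0 gam X n w)) (X n w) A"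
    and gam_noninc: "\<forall>n\<ge>1. \<forall>w\<in>space M. gam (Suc n) w \<le> gam n w"
    and gam_bound: "\<exists>g::nat \<Rightarrow> real. g \<longlonglongrightarrow> 0 \<and> (\<forall>n\<ge>1. \<forall>w\<in>space M. gam n w \<le> g n)"
    and gam_ratio: "\<forall>w\<in>space M. \<exists>C. \<forall>n\<ge>1. gam n w / gam (n + CARD('d) - 1) w \<le> C"
  shows "AE w in M. \<exists>K. compact K \<and> K \<subseteq> wl_Theta \<and>
           (\<exists>\<^sub>F n in sequentially. wl_theta rho I th0 gam X n w \<in> K)"
proof -
  interpret wang_landau M F lam piX q I rho th0 X gam
    by (intro wang_landau.intro wang_landau_axioms.intro) (fact assms)+
  from AE_frequently_lyapunov_le show ?thesis
    by (rule AE_mp) (auto intro!: AE_I2 frequently_in_compact_if_frequently_inv_prod_le d2 theta_in_wl_Theta)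
qed

end
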